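(* Let $f,g:\mathbb{R}^n\to\mathbb{R}$ satisfy assumptions (A1)–(A4) below, let $\zeta\in[0,1)$ and $x_0\in\Omega=\{x:g(x)\le0\}$. Then the time in which the trajectory $x(t;\zeta,x_0)$ first reaches the boundary of the feasible set $\Omega$ is at most $\frac{C}{1-\zeta}$, where $C$ is a constant independent of $\zeta$.
   Context: Assumptions: (A1) $\lim_{|x|\to\infty} f(x)=+\infty$; (A2) $\nabla f(x)\neq 0$ for all $x\in\Omega$; (A3) $\nabla g(x)\neq 0$ for all $x\in\Omega$; (A4) $f,g$ twice continuously differentiable. For $\zeta\in[0,1)$, $\mathbf{s}_\zeta(x)=-\frac{\nabla f(x)}{|\nabla f(x)|}-\zeta\frac{\nabla g(x)}{|\nabla g(x)|}$, and $x(t;\zeta,x_0)$ is the solution of $\frac{dx}{dt}=\mathbf{s}_\zeta(x)$, $x(0)=x_0$, on its maximal interval of existence in $E=\{x:\nabla f(x)\ne0,\nabla g(x)\ne0\}$. *)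

theory Defs
  imports "HOL-Analysis.Analysis"
begin

definition grad :: "('a::real_inner \<Rightarrow> real) \<Rightarrow> 'a \<Rightarrow> 'a" where
  "grad f x = (THE D. GDERIV f x :> D)"

definition C2 :: "('a::euclidean_space \<Rightarrow> real) \<Rightarrow> bool" where
  "C2 f \<longleftrightarrow> (\<exists>G H. (\<forall>x. GDERIV f x :> G x)
      \<and> (\<forall>x. (G has_derivative blinfun_apply (H x)) (at x))
      \<and> continuous_on UNIV (H :: 'a \<Rightarrow> 'a \<Rightarrow>\<^sub>L 'a))"

definition sfield :: "('a::real_inner \<Rightarrow> real) \<Rightarrow> ('a \<Rightarrow> real) \<Rightarrow> real \<Rightarrow> 'a \<Rightarrow> 'a" where
  "sfield f g \<zeta> x = - (inverse (norm (grad f x))) *\<^sub>R grad f x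
                    - (\<zeta> * inverse (norm (grad g x))) *\<^sub>R grad g x"

definition Eset :: "('a::real_inner \<Rightarrow> real) \<Rightarrow> ('a \<Rightarrow> real) \<Rightarrow> 'a set" where
  "Eset f g = {x. grad f x \<noteq> 0 \<and> grad g x \<noteq> 0}"

definition is_sol ::
  "('a::real_normed_vector \<Rightarrow> 'a) \<Rightarrow> 'a set \<Rightarrow> 'a \<Rightarrow> ereal \<Rightarrow> ereal \<Rightarrow> (real \<Rightarrow> 'a) \<Rightarrow> bool" where
  "is_sol s E x0 a b x \<longleftrightarrow> a < 0 \<and> 0 < b \<and> x 0 = x0 \<and>
     (\<forall>t. a < ereal t \<and> ereal t < b \<longrightarrow>
        x t \<in> E \<and> (x has_vector_derivative s (x t)) (at t))"

definition is_max_sol ::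
  "('a::real_normed_vector \<Rightarrow> 'a) \<Rightarrow> 'a set \<Rightarrow> 'a \<Rightarrow> ereal \<Rightarrow> ereal \<Rightarrow> (real \<Rightarrow> 'a) \<Rightarrow> bool" where
  "is_max_sol s E x0 a b x \<longleftrightarrow> is_sol s E x0 a b x \<and>
     \<not> (\<exists>a' b' y. a' \<le> a \<and> b \<le> b' \<and> (a' < a \<or> b < b') \<and> is_sol s E x0 a' b' y \<and>
           (\<forall>t. a < ereal t \<and> ereal t < b \<longrightarrow> y t = x t))"

end

theory Submission
  imports Defs
begin

(* By Cauchy-Schwarz, along the flow of s_zeta
     d/dt f(x(t)) = grad f . s_zeta <= -(1 - zeta) |grad f|.
   The set K = {x in Omega. f(x) <= f(x0)} is compact by (A1) and lies in E, so
   m = min_K |grad f| > 0 and f_min = min_K f exist. As long as the trajectory has not met the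
   frontier of Omega it stays in Omega by connectedness and, f being nonincreasing, in K, where
   f decreases at rate at least (1 - zeta) m; so this cannot last longer than C / (1 - zeta) with
   C = (f(x0) - f_min) / m + 1. Nor can the maximal solution end earlier while inside K: s_zeta is
   bounded and locally Lipschitz on the open set E, so a solution staying in a compact subset of E
   up to a finite time extends continuously to that time and then, by Picard iteration, beyond. *)

section \<open>Gradients of C2 functions\<close>

lemma grad_eqI:
  assumes "GDERIV f x :> D"
  shows "grad f x = D"
proof -
  have unique: "D' = D" if "GDERIV f x :> D'" for D'
  proof -
    have "(\<lambda>h. h \<bullet> D') = (\<lambda>h. h \<bullet> D)"
      using has_derivative_unique that assms unfolding gderiv_def by blast
    then have "(D' - D) \<bullet> (D' - D) = 0"
      by (metis inner_diff_right right_minus_eq)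
    then show ?thesis by simp
  qed
  show ?thesis
    unfolding grad_def using assms unique by blast
qed

lemma C2_has_gderiv:
  assumes "C2 f"
  shows "GDERIV f x :> grad f x"
  using assms grad_eqI unfolding C2_def by metis

lemma C2_grad_has_derivative:
  assumes "C2 f"
  obtains H where "\<And>x. (grad f has_derivative blinfun_apply (H x)) (at x)"
    and "continuous_on UNIV H"
proof -
  obtain G H where "\<forall>x. GDERIV f x :> G x" "\<forall>x. (G has_derivative blinfun_apply (H x)) (at x)"
    "continuous_on UNIV H"
    using assms unfolding C2_def by blast
  moreover from this(1) have "grad f = G"
    using grad_eqI by blast
  ultimately show ?thesis
    using that by blast
qed

lemma C2_continuous_on:
  assumes "C2 f"
  shows "continuous_on S f"
  using C2_has_gderiv[OF assms] unfolding gderiv_def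
  by (metis continuous_at_imp_continuous_on has_derivative_continuous)

lemma C2_continuous_on_grad:
  assumes "C2 f"
  shows "continuous_on S (grad f)"
  using C2_grad_has_derivative[OF assms]
  by (metis continuous_at_imp_continuous_on has_derivative_continuous)

lemma C2_grad_lipschitz_on_cball:
  assumes "C2 f"
  obtains L where "L-lipschitz_on (cball p r) (grad f)"
proof -
  obtain H where H: "\<And>x. (grad f has_derivative blinfun_apply (H x)) (at x)" "continuous_on UNIV H"
    using C2_grad_has_derivative[OF assms] by blast
  have "compact (H ` cball p r)"
    by (intro compact_continuous_image continuous_on_subset[OF H(2)]) auto
  then obtain L where "L > 0" "\<forall>z\<in>cball p r. norm (H z) \<le> L"
    by (auto dest!: compact_imp_bounded simp: bounded_pos)
  then have "L-lipschitz_on (cball p r) (grad f)"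
    by (intro bounded_derivative_imp_lipschitz[where f'="\<lambda>z. blinfun_apply (H z)"])
       (auto intro: has_derivative_at_withinI H(1) simp: norm_blinfun.rep_eq)
  then show ?thesis
    using that by blast
qed

section \<open>The normalized field\<close>

lemma norm_sgn_diff_le:
  fixes u v :: "'a::real_normed_vector"
  assumes "u \<noteq> 0"
  shows "norm (sgn u - sgn v) \<le> 2 * norm (u - v) / norm u"
proof (cases "v = 0")
  case True
  then show ?thesis
    using assms by (simp add: norm_sgn)
next
  case False
  have nu: "norm u > 0" and nv: "norm v > 0"
    using assms False by auto
  have "(norm v - norm u) / norm u * inverse (norm v) = inverse (norm u) - inverse (norm v)"
    using nu nv by (simp add: field_simps)
  then have "((norm v - norm u) / norm u) *\<^sub>R sgn v = v /\<^sub>R norm u - sgn v"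
    by (simp add: sgn_div_norm scaleR_diff_left)
  then have split: "sgn u - sgn v = (u - v) /\<^sub>R norm u + ((norm v - norm u) / norm u) *\<^sub>R sgn v"
    by (simp add: sgn_div_norm scaleR_diff_right)
  have "norm (sgn u - sgn v) \<le> norm ((u - v) /\<^sub>R norm u) + norm (((norm v - norm u) / norm u) *\<^sub>R sgn v)"
    unfolding split by (rule norm_triangle_ineq)
  also have "\<dots> = norm (u - v) / norm u + \<bar>norm v - norm u\<bar> / norm u"
    using False by (simp add: norm_sgn divide_inverse mult.commute abs_mult)
  also have "\<bar>norm v - norm u\<bar> \<le> norm (u - v)"
    by (metis norm_minus_commute norm_triangle_ineq3)
  finally show ?thesis
    using nu by (simp add: divide_right_mono add_divide_distrib[symmetric])
qed

lemma sgn_comp_lipschitz_near: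
  fixes G :: "'a::metric_space \<Rightarrow> 'b::real_normed_vector"
  assumes lip: "L-lipschitz_on (cball p r) G" and "0 < r" and "G p \<noteq> 0"
  obtains \<rho> L' where "0 < \<rho>" "L'-lipschitz_on (cball p \<rho>) (\<lambda>z. sgn (G z))"
proof -
  have L: "0 \<le> L"
    using lipschitz_on_nonneg[OF lip] .
  define \<rho> where "\<rho> = min r (norm (G p) / (2 * (L + 1)))"
  have \<rho>: "0 < \<rho>" "\<rho> \<le> r" "L * \<rho> \<le> norm (G p) / 2"
    using assms L by (auto simp: \<rho>_def min_def field_simps)
  have sub: "cball p \<rho> \<subseteq> cball p r"
    using \<rho> by auto
  have lower: "norm (G p) / 2 \<le> norm (G z)" if "z \<in> cball p \<rho>" for z
  proof -
    have "dist (G p) (G z) \<le> L * dist p z"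
      using lipschitz_onD[OF lip] that sub \<open>0 < r\<close> by auto
    also have "\<dots> \<le> L * \<rho>"
      using that L by (intro mult_left_mono) auto
    finally show ?thesis
      using \<rho>(3) norm_triangle_ineq2[of "G p" "G z"] by (simp add: dist_norm)
  qed
  have "(4 * L / norm (G p))-lipschitz_on (cball p \<rho>) (\<lambda>z. sgn (G z))"
  proof (rule lipschitz_onI)
    fix z z' assume z: "z \<in> cball p \<rho>" and z': "z' \<in> cball p \<rho>"
    have Gz: "G z \<noteq> 0" "0 < norm (G p)"
      using lower[OF z] assms by auto
    have "dist (sgn (G z)) (sgn (G z')) \<le> 2 * dist (G z) (G z') / norm (G z)"
      using norm_sgn_diff_le[OF Gz(1)] by (simp add: dist_norm)
    also have "\<dots> \<le> 2 * (L * dist z z') / (norm (G p) / 2)"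
    proof (rule frac_le)
      show "2 * dist (G z) (G z') \<le> 2 * (L * dist z z')"
        using lipschitz_onD[OF lip] z z' \<rho>(2) by auto
    qed (use L Gz lower[OF z] in auto)
    also have "\<dots> = 4 * L / norm (G p) * dist z z'"
      by simp
    finally show "dist (sgn (G z)) (sgn (G z')) \<le> 4 * L / norm (G p) * dist z z'" .
  qed (use L in simp)
  then show ?thesis
    using that \<rho> by blast
qed

lemma sfield_eq_sgn: "sfield f g \<zeta> x = - sgn (grad f x) - \<zeta> *\<^sub>R sgn (grad g x)"
  by (simp add: sfield_def sgn_div_norm)

lemma norm_sfield_le:
  assumes "0 \<le> \<zeta>"
  shows "norm (sfield f g \<zeta> x) \<le> 1 + \<zeta>"
proof -
  have "norm (sfield f g \<zeta> x) \<le> norm (sgn (grad f x)) + \<zeta> * norm (sgn (grad g x))"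
    unfolding sfield_eq_sgn
    using norm_triangle_ineq4[of "- sgn (grad f x)" "\<zeta> *\<^sub>R sgn (grad g x)"] assms by simp
  also have "\<dots> \<le> 1 + \<zeta>"
    using assms by (intro add_mono mult_left_le) (auto simp: norm_sgn)
  finally show ?thesis .
qed

lemma inner_sgn_self: "x \<bullet> sgn x = norm x"
  by (cases "x = 0") (simp_all add: sgn_div_norm dot_square_norm power2_eq_square)

lemma inner_grad_sfield_le:
  assumes "0 \<le> \<zeta>"
  shows "grad f x \<bullet> sfield f g \<zeta> x \<le> - (1 - \<zeta>) * norm (grad f x)"
proof -
  have "\<bar>grad f x \<bullet> sgn (grad g x)\<bar> \<le> norm (grad f x) * norm (sgn (grad g x))"
    by (rule Cauchy_Schwarz_ineq2)
  also have "\<dots> \<le> norm (grad f x)"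
    by (simp add: norm_sgn)
  finally have "\<zeta> * - norm (grad f x) \<le> \<zeta> * (grad f x \<bullet> sgn (grad g x))"
    using assms by (intro mult_left_mono) auto
  then show ?thesis
    unfolding sfield_eq_sgn by (simp add: inner_diff_right inner_sgn_self algebra_simps)
qed

definition locally_lipschitz_on :: "'a::metric_space set \<Rightarrow> ('a \<Rightarrow> 'b::metric_space) \<Rightarrow> bool" where
  "locally_lipschitz_on E F \<longleftrightarrow> (\<forall>p\<in>E. \<exists>r>0. \<exists>L. L-lipschitz_on (cball p r) F)"

lemma locally_lipschitz_onE:
  assumes "locally_lipschitz_on E F" "open E" "p \<in> E"
  obtains r L where "0 < r" "cball p r \<subseteq> E" "L-lipschitz_on (cball p r) F"
proof -
  obtain r L where r: "0 < r" "L-lipschitz_on (cball p r) F"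
    using assms(1,3) unfolding locally_lipschitz_on_def by blast
  obtain e where e: "0 < e" "cball p e \<subseteq> E"
    using assms(2,3) open_contains_cball by blast
  have "L-lipschitz_on (cball p (min r e)) F"
    by (rule lipschitz_on_subset[OF r(2)]) auto
  then show ?thesis
    using that r e by (metis min_less_iff_conj order.trans cball_min_Int inf_le2)
qed

lemma locally_lipschitz_on_imp_continuous_on:
  assumes "locally_lipschitz_on E F"
  shows "continuous_on E F"
proof (rule continuous_at_imp_continuous_on, rule ballI)
  fix p assume "p \<in> E"
  then obtain r L where "0 < r" "L-lipschitz_on (cball p r) F"
    using assms unfolding locally_lipschitz_on_def by blast
  moreover have "ball p r \<subseteq> interior (cball p r)"
    by (intro interior_maximal ball_subset_cball open_ball)
  ultimately have "continuous_on (cball p r) F" "p \<in> interior (cball p r)"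
    by (auto intro: lipschitz_on_continuous_on)
  then show "isCont F p"
    by (rule continuous_on_interior)
qed

lemma open_Eset:
  assumes "C2 f" "C2 g"
  shows "open (Eset f g)"
  unfolding Eset_def
  by (intro open_Collect_conj open_Collect_neq C2_continuous_on_grad assms continuous_on_const)

lemma sfield_locally_lipschitz:
  assumes "C2 f" "C2 g"
  shows "locally_lipschitz_on (Eset f g) (sfield f g \<zeta>)"
  unfolding locally_lipschitz_on_def
proof
  fix p assume "p \<in> Eset f g"
  then have nonzero: "grad f p \<noteq> 0" "grad g p \<noteq> 0"
    by (auto simp: Eset_def)
  obtain Lf Lg where "Lf-lipschitz_on (cball p 1) (grad f)" "Lg-lipschitz_on (cball p 1) (grad g)"
    using C2_grad_lipschitz_on_cball assms by metis
  then obtain \<rho>f \<rho>g Lf' Lg' where \<rho>: "0 < \<rho>f" "0 < \<rho>g"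
    and lip: "Lf'-lipschitz_on (cball p \<rho>f) (\<lambda>z. sgn (grad f z))"
      "Lg'-lipschitz_on (cball p \<rho>g) (\<lambda>z. sgn (grad g z))"
    using sgn_comp_lipschitz_near nonzero by (metis zero_less_one)
  define r where "r = min \<rho>f \<rho>g"
  have "(Lf' + \<bar>\<zeta>\<bar> * Lg')-lipschitz_on (cball p r) (\<lambda>z. - sgn (grad f z) - \<zeta> *\<^sub>R sgn (grad g z))"
    unfolding r_def
    by (intro lipschitz_on_diff lipschitz_on_minus lipschitz_on_cmult lipschitz_on_subset[OF lip(1)]
        lipschitz_on_subset[OF lip(2)]) auto
  then show "\<exists>r>0. \<exists>L. L-lipschitz_on (cball p r) (sfield f g \<zeta>)"
    using \<rho> unfolding r_def sfield_eq_sgn[abs_def] by (metis min_less_iff_conj)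
qed

section \<open>Local existence by Picard iteration\<close>

text \<open>The integral is taken up to the time clamped to [t0, t1], so that each iterate is a
  bounded continuous function on the whole line, where Banach's fixed point theorem applies.\<close>

definition picard_step ::
  "('a::real_normed_vector \<Rightarrow> 'a) \<Rightarrow> 'a \<Rightarrow> real \<Rightarrow> real \<Rightarrow> (real \<Rightarrow>\<^sub>C 'a) \<Rightarrow> real \<Rightarrow> 'a" where
  "picard_step F p t0 t1 \<phi> = ext_cont (\<lambda>t. p + integral {t0..t} (\<lambda>u. F (\<phi> u))) t0 t1"

context
  fixes F :: "'a::banach \<Rightarrow> 'a" and p :: 'a and r M L t0 \<delta> :: real
  assumes radius: "0 \<le> r"
    and F_bound: "\<forall>z\<in>cball p r. norm (F z) \<le> M"
    and F_lipschitz: "L-lipschitz_on (cball p r) F"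
    and short: "0 < \<delta>" "\<delta> * M \<le> r" "\<delta> * L \<le> 1 / 2"
begin

lemma picard_integrand_continuous:
  assumes "\<phi> \<in> PiC UNIV (\<lambda>_. cball p r)"
  shows "continuous_on S (\<lambda>u. F (\<phi> u))"
  using assms
  by (intro continuous_on_compose2[OF lipschitz_on_continuous_on[OF F_lipschitz] continuous_on_apply_bcontfun])
     (auto simp: mem_PiC_iff)

lemma picard_step_eq:
  assumes "t \<in> {t0..t0 + \<delta>}"
  shows "picard_step F p t0 (t0 + \<delta>) \<phi> t = p + integral {t0..t} (\<lambda>u. F (\<phi> u))"
  using assms by (simp add: picard_step_def)

lemma picard_step_clamp:
  obtains s where "s \<in> {t0..t0 + \<delta>}"
    and "\<And>\<phi>. picard_step F p t0 (t0 + \<delta>) \<phi> t = p + integral {t0..s} (\<lambda>u. F (\<phi> u))"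
  using clamp_in_interval[of t0 "t0 + \<delta>" t] short(1)
  by (simp add: picard_step_def ext_cont_def)

lemma picard_step_in_cball:
  assumes "\<phi> \<in> PiC UNIV (\<lambda>_. cball p r)"
  shows "picard_step F p t0 (t0 + \<delta>) \<phi> t \<in> cball p r"
proof -
  obtain s where s: "s \<in> {t0..t0 + \<delta>}"
    and eq: "picard_step F p t0 (t0 + \<delta>) \<phi> t = p + integral {t0..s} (\<lambda>u. F (\<phi> u))"
    using picard_step_clamp by metis
  have "norm (integral {t0..s} (\<lambda>u. F (\<phi> u))) \<le> M * (s - t0)"
    using s assms F_bound picard_integrand_continuous[OF assms]
    by (intro integral_bound) (auto simp: mem_PiC_iff)
  also have "\<dots> \<le> \<delta> * M"
  proof -
    have "0 \<le> M"
      using F_bound radius by (metis centre_in_cball norm_ge_zero order_trans)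
    then show ?thesis
      using s by (simp add: mult.commute mult_left_mono)
  qed
  finally show ?thesis
    using short(2) by (simp add: eq dist_norm)
qed

lemma picard_step_bcontfun:
  assumes "\<phi> \<in> PiC UNIV (\<lambda>_. cball p r)"
  shows "picard_step F p t0 (t0 + \<delta>) \<phi> \<in> bcontfun"
proof -
  have "continuous_on {t0..t0 + \<delta>} (\<lambda>t. p + integral {t0..t} (\<lambda>u. F (\<phi> u)))"
    by (intro continuous_intros indefinite_integral_continuous_1 integrable_continuous_real
        picard_integrand_continuous[OF assms])
  then have "continuous_on UNIV (picard_step F p t0 (t0 + \<delta>) \<phi>)"
    unfolding picard_step_def by (intro continuous_on_ext_cont) simp
  moreover have "bounded (range (picard_step F p t0 (t0 + \<delta>) \<phi>))"
    using picard_step_in_cball[OF assms] by (intro bounded_subset[OF bounded_cball]) auto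
  ultimately show ?thesis
    by (simp add: bcontfun_def)
qed

lemma picard_step_contraction:
  assumes "\<phi> \<in> PiC UNIV (\<lambda>_. cball p r)" "\<psi> \<in> PiC UNIV (\<lambda>_. cball p r)"
  shows "dist (picard_step F p t0 (t0 + \<delta>) \<phi> t) (picard_step F p t0 (t0 + \<delta>) \<psi> t) \<le> 1/2 * dist \<phi> \<psi>"
proof -
  obtain s where s: "s \<in> {t0..t0 + \<delta>}" and
    eq: "\<And>\<xi>. picard_step F p t0 (t0 + \<delta>) \<xi> t = p + integral {t0..s} (\<lambda>u. F (\<xi> u))"
    using picard_step_clamp by metis
  have L: "0 \<le> L"
    using lipschitz_on_nonneg[OF F_lipschitz] .
  have "dist (picard_step F p t0 (t0 + \<delta>) \<phi> t) (picard_step F p t0 (t0 + \<delta>) \<psi> t)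
      = norm (integral {t0..s} (\<lambda>u. F (\<phi> u) - F (\<psi> u)))"
    using s by (simp add: eq dist_norm integral_diff integrable_continuous_real
        picard_integrand_continuous assms)
  also have "\<dots> \<le> (L * dist \<phi> \<psi>) * (s - t0)"
  proof (rule integral_bound)
    fix u
    have "dist (F (\<phi> u)) (F (\<psi> u)) \<le> L * dist (\<phi> u) (\<psi> u)"
      using assms by (intro lipschitz_onD[OF F_lipschitz]) (auto simp: mem_PiC_iff)
    also have "\<dots> \<le> L * dist \<phi> \<psi>"
      using L by (intro mult_left_mono dist_bounded)
    finally show "norm (F (\<phi> u) - F (\<psi> u)) \<le> L * dist \<phi> \<psi>"
      by (simp add: dist_norm)
  qed (use s in \<open>auto intro!: continuous_intros picard_integrand_continuous assms\<close>)
  also have "\<dots> \<le> (L * dist \<phi> \<psi>) * \<delta>"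
    using s L by (intro mult_left_mono) auto
  also have "\<dots> \<le> 1/2 * dist \<phi> \<psi>"
    using short(3) by (metis mult.commute mult.left_commute mult_right_mono zero_le_dist)
  finally show ?thesis .
qed

lemma picard_fixpoint:
  obtains y where "continuous_on {t0..t0 + \<delta>} y"
    and "\<And>t. t \<in> {t0..t0 + \<delta>} \<Longrightarrow> y t \<in> cball p r \<and> y t = p + integral {t0..t} (\<lambda>u. F (y u))"
proof -
  define S where "S = PiC UNIV (\<lambda>_::real. cball p r)"
  define T where "T \<phi> = Bcontfun (picard_step F p t0 (t0 + \<delta>) \<phi>)" for \<phi>
  have T: "apply_bcontfun (T \<phi>) = picard_step F p t0 (t0 + \<delta>) \<phi>" if "\<phi> \<in> S" for \<phi>
    using picard_step_bcontfun that by (simp add: T_def S_def Bcontfun_inverse)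
  have "const_bcontfun p \<in> S"
    using radius by (simp add: S_def mem_PiC_iff const_bcontfun.rep_eq)
  moreover have "complete S"
    by (simp add: S_def complete_eq_closed closed_PiC)
  moreover have "T ` S \<subseteq> S"
    using picard_step_in_cball T by (auto simp: S_def mem_PiC_iff)
  moreover have "dist (T \<phi>) (T \<psi>) \<le> 1/2 * dist \<phi> \<psi>" if "\<phi> \<in> S" "\<psi> \<in> S" for \<phi> \<psi>
    using that picard_step_contraction by (intro dist_bound) (simp add: T S_def)
  ultimately obtain \<phi> where \<phi>: "\<phi> \<in> S" "T \<phi> = \<phi>"
    using Banach_fix[of S "1/2" T] by auto
  have "\<phi> t \<in> cball p r \<and> \<phi> t = p + integral {t0..t} (\<lambda>u. F (\<phi> u))"
    if "t \<in> {t0..t0 + \<delta>}" for t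
  proof
    show "\<phi> t \<in> cball p r"
      using \<phi>(1) by (simp add: S_def mem_PiC_iff Pi_iff)
    have "\<phi> t = T \<phi> t"
      using \<phi>(2) by simp
    also have "\<dots> = p + integral {t0..t} (\<lambda>u. F (\<phi> u))"
      using T[OF \<phi>(1)] picard_step_eq[OF that] by simp
    finally show "\<phi> t = p + integral {t0..t} (\<lambda>u. F (\<phi> u))" .
  qed
  then show ?thesis
    using that by blast
qed

end

lemma local_integral_solution:
  fixes F :: "'a::banach \<Rightarrow> 'a" and t0 :: real
  assumes "0 < r" "\<forall>z\<in>cball p r. norm (F z) \<le> M" "L-lipschitz_on (cball p r) F"
  obtains \<delta> y where "0 < \<delta>" "continuous_on {t0..t0 + \<delta>} y"
    "\<And>t. t \<in> {t0..t0 + \<delta>} \<Longrightarrow> y t \<in> cball p r \<and> y t = p + integral {t0..t} (\<lambda>u. F (y u))"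
proof -
  have "0 \<le> M"
    using assms by (metis centre_in_cball less_imp_le norm_ge_zero order_trans)
  moreover have "0 \<le> L"
    using lipschitz_on_nonneg[OF assms(3)] .
  moreover define \<delta> where "\<delta> = min (r / (M + 1)) (1 / (2 * (L + 1)))"
  ultimately have "0 < \<delta>" "\<delta> * M \<le> r" "\<delta> * L \<le> 1 / 2"
    using assms(1) by (auto simp: \<delta>_def min_def field_simps)
  with assms obtain y where "continuous_on {t0..t0 + \<delta>} y"
    "\<And>t. t \<in> {t0..t0 + \<delta>} \<Longrightarrow> y t \<in> cball p r \<and> y t = p + integral {t0..t} (\<lambda>u. F (y u))"
    using picard_fixpoint[of r p F M L \<delta> t0] by auto
  then show ?thesis
    using that \<open>0 < \<delta>\<close> by blast
qed

section \<open>Solutions and their extension\<close>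

lemma is_solD:
  assumes "is_sol F E x0 a b x" "a < ereal t" "ereal t < b"
  shows "x t \<in> E" "(x has_vector_derivative F (x t)) (at t)"
  using assms by (auto simp: is_sol_def)

lemma is_sol_nonneg_time:
  assumes "is_sol F E x0 a b x" "0 \<le> t"
  shows "a < ereal t"
  using assms by (auto simp: is_sol_def intro: order.strict_trans2)

lemma is_sol_continuous_on:
  assumes "is_sol F E x0 a b x" "a < ereal S" "ereal T < b"
  shows "continuous_on {S..T} x"
proof (rule continuous_at_imp_continuous_on, rule ballI)
  fix t assume t: "t \<in> {S..T}"
  have "a < ereal t"
    using assms(2) by (rule order.strict_trans2) (use t in simp)
  moreover have "ereal t < b"
    using assms(3) by (rule order.strict_trans1[rotated]) (use t in simp)
  ultimately show "isCont x t"
    using is_solD(2)[OF assms(1)] has_vector_derivative_continuous by blast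
qed

lemma is_sol_lipschitz_on:
  assumes sol: "is_sol F E x0 a (ereal B) x" and bound: "\<forall>z\<in>E. norm (F z) \<le> M"
  shows "M-lipschitz_on {0..<B} x"
proof (rule bounded_derivative_imp_lipschitz)
  fix t assume "t \<in> {0..<B}"
  then show "(x has_derivative (\<lambda>h. h *\<^sub>R F (x t))) (at t within {0..<B})"
    using is_solD[OF sol] is_sol_nonneg_time[OF sol]
    by (auto simp: has_vector_derivative_def intro: has_derivative_at_withinI)
  have "norm (F (x t)) \<le> M"
    using is_solD(1)[OF sol] is_sol_nonneg_time[OF sol] bound \<open>t \<in> {0..<B}\<close> by auto
  then show "onorm (\<lambda>h. h *\<^sub>R F (x t)) \<le> M"
    by (intro onorm_le) (simp add: mult.commute[of M] mult_left_mono)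
next
  have "x 0 \<in> E"
    by (rule is_solD(1)[OF sol is_sol_nonneg_time[OF sol]]) (use sol in \<open>auto simp: is_sol_def\<close>)
  then show "0 \<le> M"
    using bound norm_ge_zero order_trans by blast
qed simp

lemma is_sol_integral_eq:
  fixes F :: "'a::banach \<Rightarrow> 'a"
  assumes sol: "is_sol F E x0 a b x" and t: "0 \<le> t" "ereal t < b"
  shows "x t = x0 + integral {0..t} (\<lambda>u. F (x u))"
proof -
  have "((\<lambda>u. F (x u)) has_integral (x t - x 0)) {0..t}"
  proof (rule fundamental_theorem_of_calculus[of 0 t x "\<lambda>u. F (x u)"])
    fix u assume "u \<in> {0..t}"
    then have "a < ereal u" "ereal u < b"
      using is_sol_nonneg_time[OF sol] order.strict_trans1[OF _ t(2), of "ereal u"] by auto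
    then show "(x has_vector_derivative F (x u)) (at u within {0..t})"
      using is_solD(2)[OF sol] has_vector_derivative_at_within by blast
  qed (use t in simp)
  then show ?thesis
    using sol by (auto simp: is_sol_def integral_unique)
qed

lemma integral_equation_has_vector_derivative:
  fixes F :: "'a::banach \<Rightarrow> 'a" and w :: "real \<Rightarrow> 'a"
  assumes "continuous_on {t0..t1} (\<lambda>u. F (w u))"
    and eq: "\<And>s. s \<in> {t0..t1} \<Longrightarrow> w s = c + integral {t0..s} (\<lambda>u. F (w u))"
    and t: "t0 < t" "t < t1"
  shows "(w has_vector_derivative F (w t)) (at t)"
proof -
  have "((\<lambda>s. integral {t0..s} (\<lambda>u. F (w u))) has_vector_derivative F (w t)) (at t within {t0..t1})"
    using t by (intro integral_has_vector_derivative assms(1)) auto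
  then have "((\<lambda>s. c + integral {t0..s} (\<lambda>u. F (w u))) has_vector_derivative F (w t)) (at t within {t0..t1})"
    using has_vector_derivative_add[OF has_vector_derivative_const] by fastforce
  then have "((\<lambda>s. c + integral {t0..s} (\<lambda>u. F (w u))) has_vector_derivative F (w t)) (at t)"
    using at_within_Icc_at t by metis
  then show ?thesis
    by (rule has_vector_derivative_transform_within_open[where S="{t0<..<t1}"]) (use t eq in auto)
qed

lemma integral_equation_append:
  fixes F :: "'a::banach \<Rightarrow> 'a" and w :: "real \<Rightarrow> 'a"
  assumes cont: "continuous_on {t0..t2} (\<lambda>u. F (w u))" and "t0 \<le> t1"
    and left: "\<And>s. s \<in> {t0..t1} \<Longrightarrow> w s = c + integral {t0..s} (\<lambda>u. F (w u))"
    and right: "\<And>s. s \<in> {t1..t2} \<Longrightarrow> w s = w t1 + integral {t1..s} (\<lambda>u. F (w u))"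
    and s: "s \<in> {t0..t2}"
  shows "w s = c + integral {t0..s} (\<lambda>u. F (w u))"
proof (cases "s \<le> t1")
  case True
  then show ?thesis
    using left s by simp
next
  case False
  have "(\<lambda>u. F (w u)) integrable_on {t0..s}"
    using s by (intro integrable_continuous_real continuous_on_subset[OF cont]) auto
  then have "integral {t0..t1} (\<lambda>u. F (w u)) + integral {t1..s} (\<lambda>u. F (w u))
      = integral {t0..s} (\<lambda>u. F (w u))"
    using False \<open>t0 \<le> t1\<close> by (intro Henstock_Kurzweil_Integration.integral_combine) auto
  then show ?thesis
    using left[of t1] right[of s] False s \<open>t0 \<le> t1\<close> by (simp add: add.assoc)
qed

lemma is_sol_integral_eq_upto_end:
  fixes F :: "'a::banach \<Rightarrow> 'a"
  assumes sol: "is_sol F E x0 a (ereal B) x"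
    and x': "continuous_on {0..B} x'" "\<And>t. t \<in> {0..<B} \<Longrightarrow> x' t = x t"
    and cont: "continuous_on {0..B} (\<lambda>u. F (x' u))"
    and s: "s \<in> {0..B}"
  shows "x' s = x0 + integral {0..s} (\<lambda>u. F (x' u))"
proof -
  define h where "h s = x' s - (x0 + integral {0..s} (\<lambda>u. F (x' u)))" for s
  have "h t = 0" if "t \<in> {0..<B}" for t
  proof -
    have "integral {0..t} (\<lambda>u. F (x' u)) = integral {0..t} (\<lambda>u. F (x u))"
      using that x'(2) by (intro integral_cong) auto
    then show ?thesis
      using is_sol_integral_eq[OF sol] that x'(2) by (simp add: h_def)
  qed
  moreover have "0 < B"
    using sol by (simp add: is_sol_def)
  moreover have "continuous_on {0..B} h"
    unfolding h_def by (intro continuous_intros x' indefinite_integral_continuous_1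
        integrable_continuous_real cont)
  ultimately have "h ` {0..B} \<subseteq> {0}"
    using image_closure_subset[of "{0..<B}" h "{0}"] by auto
  then have "h s = 0"
    using s by blast
  then show ?thesis
    by (simp add: h_def)
qed

lemma is_sol_continuous_extension_to_end:
  fixes F :: "'a::banach \<Rightarrow> 'a"
  assumes sol: "is_sol F E x0 a (ereal B) x" and bound: "\<forall>z\<in>E. norm (F z) \<le> M"
    and K: "closed K" "\<forall>t\<in>{0..<B}. x t \<in> K"
  obtains x' where "continuous_on {0..B} x'" "\<And>t. t \<in> {0..<B} \<Longrightarrow> x' t = x t" "x' B \<in> K"
proof -
  have B: "0 < B"
    using sol by (simp add: is_sol_def)
  obtain x' where x': "uniformly_continuous_on {0..B} x'" "\<And>t. t \<in> {0..<B} \<Longrightarrow> x t = x' t"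
    using uniformly_continuous_on_extension_on_closure[OF lipschitz_on_uniformly_continuous
        [OF is_sol_lipschitz_on[OF sol bound]]] closure_atLeastLessThan[OF B] by metis
  have "continuous_on {0..B} x'"
    using x'(1) by (rule uniformly_continuous_imp_continuous)
  moreover have "x' ` {0..B} \<subseteq> K"
    using image_closure_subset[of "{0..<B}" x' K] calculation K x'(2) B by auto
  ultimately show ?thesis
    using x'(2) B by (intro that[of x']) auto
qed

lemma is_sol_of_integral_equation:
  fixes F :: "'a::banach \<Rightarrow> 'a"
  assumes sol: "is_sol F E x0 a (ereal B) x" and "B \<le> T"
    and agree: "\<And>t. t < B \<Longrightarrow> w t = x t"
    and cont: "continuous_on {0..T} (\<lambda>u. F (w u))"
    and eq: "\<And>s. s \<in> {0..T} \<Longrightarrow> w s = x0 + integral {0..s} (\<lambda>u. F (w u))"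
    and in_E: "\<And>t. t \<in> {0..T} \<Longrightarrow> w t \<in> E"
  shows "is_sol F E x0 a (ereal T) w"
proof -
  have start: "a < 0" "0 < B" "x 0 = x0"
    using sol by (auto simp: is_sol_def)
  have "w t \<in> E \<and> (w has_vector_derivative F (w t)) (at t)"
    if t: "a < ereal t" "ereal t < ereal T" for t
  proof (cases "t < B")
    case True
    have "(x has_vector_derivative F (w t)) (at t)"
      using is_solD(2)[OF sol] t True agree by simp
    then have "(w has_vector_derivative F (w t)) (at t)"
      by (rule has_vector_derivative_transform_within_open[where S="{..<B}"]) (use True agree in auto)
    then show ?thesis
      using is_solD(1)[OF sol] t True agree by simp
  next
    case False
    then have "0 < t" "t < T"
      using start t by auto
    then show ?thesis
      using integral_equation_has_vector_derivative[OF cont eq] in_E by auto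
  qed
  then show ?thesis
    using start agree \<open>B \<le> T\<close> by (auto simp: is_sol_def)
qed

lemma is_sol_extend:
  fixes F :: "'a::banach \<Rightarrow> 'a"
  assumes sol: "is_sol F E x0 a (ereal B) x"
    and E: "open E" "locally_lipschitz_on E F" "\<forall>z\<in>E. norm (F z) \<le> M"
    and K: "compact K" "K \<subseteq> E" "\<forall>t\<in>{0..<B}. x t \<in> K"
  obtains T w where "B < T" "is_sol F E x0 a (ereal T) w" "\<And>t. t < B \<Longrightarrow> w t = x t"
proof -
  have B: "0 < B"
    using sol by (simp add: is_sol_def)
  obtain x' where x': "continuous_on {0..B} x'" "\<And>t. t \<in> {0..<B} \<Longrightarrow> x' t = x t" "x' B \<in> K"
    using is_sol_continuous_extension_to_end[OF sol E(3) compact_imp_closed[OF K(1)] K(3)] by blast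
  define p where "p = x' B"
  obtain r L where r: "0 < r" "cball p r \<subseteq> E" "L-lipschitz_on (cball p r) F"
    using locally_lipschitz_onE[OF E(2,1)] x'(3) K(2) p_def by blast
  obtain \<delta> y where \<delta>: "0 < \<delta>" "continuous_on {B..B + \<delta>} y"
    and y: "\<And>t. t \<in> {B..B + \<delta>} \<Longrightarrow> y t \<in> cball p r \<and> y t = p + integral {B..t} (\<lambda>u. F (y u))"
    using local_integral_solution[OF r(1) _ r(3)] r(2) E(3) by (metis subsetD)
  define w where "w t = (if t < B then x t else y t)" for t
  have w_left: "w t = x' t" if "t \<in> {0..B}" for t
    using that x'(2) y[of B] \<delta>(1) by (cases "t < B") (auto simp: w_def p_def)
  have "continuous_on ({0..B} \<union> {B..B + \<delta>}) w"
    using continuous_on_eq[OF x'(1) w_left[symmetric]] continuous_on_eq[OF \<delta>(2), of w]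
    by (intro continuous_on_closed_Un) (auto simp: w_def)
  moreover have "{0..B} \<union> {B..B + \<delta>} = {0..B + \<delta>}"
    using B \<delta>(1) by auto
  ultimately have w_cont: "continuous_on {0..B + \<delta>} w"
    by simp
  have w_E: "w t \<in> E" if "t \<in> {0..B + \<delta>}" for t
    using that K(2,3) r(2) y[of t] by (auto simp: w_def)
  have Fw_cont: "continuous_on {0..B + \<delta>} (\<lambda>u. F (w u))"
    using continuous_on_compose2[OF locally_lipschitz_on_imp_continuous_on[OF E(2)] w_cont] w_E
    by blast
  have left: "w s = x0 + integral {0..s} (\<lambda>u. F (w u))" if "s \<in> {0..B}" for s
  proof -
    have "continuous_on {0..B} (\<lambda>u. F (w u))"
      using \<delta>(1) by (intro continuous_on_subset[OF Fw_cont]) auto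
    then have "continuous_on {0..B} (\<lambda>u. F (x' u))"
      by (rule continuous_on_eq) (simp add: w_left)
    then have "x' s = x0 + integral {0..s} (\<lambda>u. F (x' u))"
      using is_sol_integral_eq_upto_end[OF sol x'(1,2)] that by blast
    moreover have "integral {0..s} (\<lambda>u. F (x' u)) = integral {0..s} (\<lambda>u. F (w u))"
      using that w_left by (intro integral_cong) auto
    ultimately show ?thesis
      using that w_left by simp
  qed
  have right: "w s = w B + integral {B..s} (\<lambda>u. F (w u))" if "s \<in> {B..B + \<delta>}" for s
  proof -
    have "integral {B..s} (\<lambda>u. F (y u)) = integral {B..s} (\<lambda>u. F (w u))"
      by (intro integral_cong) (auto simp: w_def)
    then show ?thesis
      using that y[of s] y[of B] \<delta>(1) by (auto simp: w_def)
  qed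
  have "is_sol F E x0 a (ereal (B + \<delta>)) w"
    using integral_equation_append[OF Fw_cont _ left right] B \<delta>(1) w_E Fw_cont
    by (intro is_sol_of_integral_equation[OF sol]) (auto simp: w_def)
  then show ?thesis
    using \<delta>(1) by (intro that[of "B + \<delta>" w]) (auto simp: w_def)
qed

lemma is_max_sol_leaves_compact:
  fixes F :: "'a::banach \<Rightarrow> 'a"
  assumes max: "is_max_sol F E x0 a (ereal B) x"
    and E: "open E" "locally_lipschitz_on E F" "\<forall>z\<in>E. norm (F z) \<le> M"
    and K: "compact K" "K \<subseteq> E"
  shows "\<exists>t\<in>{0..<B}. x t \<notin> K"
proof (rule ccontr)
  assume "\<not> ?thesis"
  moreover have sol: "is_sol F E x0 a (ereal B) x"
    using max by (simp add: is_max_sol_def)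
  ultimately obtain T w where "B < T" "is_sol F E x0 a (ereal T) w" "\<And>t. t < B \<Longrightarrow> w t = x t"
    using is_sol_extend[OF sol E K] by blast
  then have "\<exists>a' b' y. a' \<le> a \<and> ereal B \<le> b' \<and> (a' < a \<or> ereal B < b') \<and> is_sol F E x0 a' b' y \<and>
      (\<forall>t. a < ereal t \<and> ereal t < ereal B \<longrightarrow> y t = x t)"
    by (intro exI[of _ a] exI[of _ "ereal T"] exI[of _ w]) auto
  then show False
    using max by (simp add: is_max_sol_def)
qed

section \<open>Descent along the flow\<close>

lemma compact_sublevel_set:
  fixes f :: "'a::euclidean_space \<Rightarrow> real"
  assumes "continuous_on UNIV f" "filterlim f at_top at_infinity"
  shows "compact {x. f x \<le> c}"
proof -
  obtain R where R: "\<And>x. R \<le> norm x \<Longrightarrow> c + 1 \<le> f x"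
    using assms(2) unfolding filterlim_at_top eventually_at_infinity by blast
  have "{x. f x \<le> c} \<subseteq> cball 0 R"
  proof
    fix x assume "x \<in> {x. f x \<le> c}"
    then have "\<not> R \<le> norm x"
      using R by force
    then show "x \<in> cball 0 R"
      by simp
  qed
  moreover have "closed {x. f x \<le> c}"
    by (intro closed_Collect_le assms(1) continuous_on_const)
  ultimately show ?thesis
    by (metis bounded_cball bounded_subset compact_eq_bounded_closed)
qed

lemma has_real_derivative_gderiv_compose:
  assumes "GDERIV f (x t) :> G" "(x has_vector_derivative v) (at t)"
  shows "((\<lambda>s. f (x s)) has_real_derivative G \<bullet> v) (at t)"
proof -
  have "((\<lambda>s. f (x s)) has_derivative (\<lambda>h. (h *\<^sub>R v) \<bullet> G)) (at t)"
    using has_derivative_compose[of x] assms unfolding gderiv_def has_vector_derivative_def by blast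
  then show ?thesis
    by (simp add: has_field_derivative_def inner_commute mult_commute_abs)
qed

lemma sfield_sol_descent:
  fixes f g :: "'a::euclidean_space \<Rightarrow> real"
  assumes f: "C2 f" and \<zeta>: "0 \<le> \<zeta>" "\<zeta> \<le> 1"
    and sol: "is_sol (sfield f g \<zeta>) E x0 a b x" and T: "0 \<le> T" "ereal T < b"
    and m: "\<And>t. t \<in> {0..T} \<Longrightarrow> m \<le> norm (grad f (x t))"
  shows "f (x T) \<le> f x0 - (1 - \<zeta>) * m * T"
proof -
  have "f (x T) + (1 - \<zeta>) * m * T \<le> f (x 0) + (1 - \<zeta>) * m * 0"
  proof (rule DERIV_nonpos_imp_nonincreasing[OF T(1)])
    fix s assume s: "0 \<le> s" "s \<le> T"
    then have "a < ereal s" "ereal s < b"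
      using is_sol_nonneg_time[OF sol] order.strict_trans1[OF _ T(2), of "ereal s"] by auto
    then have "((\<lambda>t. f (x t)) has_real_derivative grad f (x s) \<bullet> sfield f g \<zeta> (x s)) (at s)"
      using has_real_derivative_gderiv_compose[OF C2_has_gderiv[OF f] is_solD(2)[OF sol]] by blast
    then have "((\<lambda>t. f (x t) + (1 - \<zeta>) * m * t) has_real_derivative
        grad f (x s) \<bullet> sfield f g \<zeta> (x s) + (1 - \<zeta>) * m) (at s)"
      by (auto intro!: derivative_eq_intros)
    moreover have "(1 - \<zeta>) * m \<le> (1 - \<zeta>) * norm (grad f (x s))"
      using m s \<zeta>(2) by (intro mult_left_mono) auto
    then have "grad f (x s) \<bullet> sfield f g \<zeta> (x s) + (1 - \<zeta>) * m \<le> 0"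
      using inner_grad_sfield_le[OF \<zeta>(1), of f "x s" g, unfolded mult_minus_left] by linarith
    ultimately show "\<exists>y. ((\<lambda>t. f (x t) + (1 - \<zeta>) * m * t) has_real_derivative y) (at s) \<and> y \<le> 0"
      by blast
  qed
  then show ?thesis
    using sol by (simp add: is_sol_def)
qed

lemma sfield_sol_stays_in_sublevel:
  fixes f g :: "'a::euclidean_space \<Rightarrow> real"
  assumes f: "C2 f" and \<zeta>: "0 \<le> \<zeta>" "\<zeta> \<le> 1"
    and sol: "is_sol (sfield f g \<zeta>) E x0 a b x" and T: "0 \<le> T" "ereal T < b"
    and "x0 \<in> S" and avoid: "\<And>t. t \<in> {0..T} \<Longrightarrow> x t \<notin> frontier S"
  shows "x T \<in> S \<inter> {y. f y \<le> f x0}"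
proof
  have "connected (x ` {0..T})"
    using is_sol_continuous_on[OF sol is_sol_nonneg_time[OF sol order_refl] T(2)]
    by (intro connected_continuous_image) auto
  moreover have "x0 \<in> x ` {0..T}"
    using sol T(1) by (auto simp: is_sol_def)
  ultimately have "x ` {0..T} \<subseteq> S"
    using connected_Int_frontier[of "x ` {0..T}" S] avoid \<open>x0 \<in> S\<close> by blast
  then show "x T \<in> S"
    using T(1) by auto
  show "x T \<in> {y. f y \<le> f x0}"
    using sfield_sol_descent[OF f \<zeta> sol T, of 0] by simp
qed

lemma sfield_max_sol_reaches_frontier:
  fixes f g :: "'a::euclidean_space \<Rightarrow> real" and S :: "'a set" and x0 :: 'a
  defines "K \<equiv> S \<inter> {y. f y \<le> f x0}"
  assumes f: "C2 f" and g: "C2 g" and "x0 \<in> S"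
    and K: "compact K" "K \<subseteq> Eset f g"
    and m: "0 < m" "\<And>y. y \<in> K \<Longrightarrow> m \<le> norm (grad f y)"
    and fmin: "\<And>y. y \<in> K \<Longrightarrow> fmin \<le> f y"
    and \<zeta>: "0 \<le> \<zeta>" "\<zeta> < 1"
    and max: "is_max_sol (sfield f g \<zeta>) (Eset f g) x0 a b x"
  shows "\<exists>\<tau>. 0 \<le> \<tau> \<and> ereal \<tau> < b \<and> x \<tau> \<in> frontier S \<and> \<tau> \<le> ((f x0 - fmin) / m + 1) / (1 - \<zeta>)"
proof (rule ccontr)
  define T where "T = ((f x0 - fmin) / m + 1) / (1 - \<zeta>)"
  assume "\<not> ?thesis"
  then have avoid: "x t \<notin> frontier S" if "0 \<le> t" "ereal t < b" "t \<le> T" for t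
    using that by (auto simp: T_def)
  have sol: "is_sol (sfield f g \<zeta>) (Eset f g) x0 a b x"
    using max by (simp add: is_max_sol_def)
  have in_K: "x t \<in> K" if t: "0 \<le> t" "ereal t < b" "t \<le> T" for t
    unfolding K_def
  proof (rule sfield_sol_stays_in_sublevel[OF f \<zeta>(1) _ sol t(1,2) \<open>x0 \<in> S\<close>])
    fix s assume "s \<in> {0..t}"
    then show "x s \<notin> frontier S"
      using t by (intro avoid) (auto intro: order.strict_trans1[OF _ t(2)])
  qed (use \<zeta> in simp)
  have "0 \<le> f x0 - fmin"
    using fmin[of x0] \<open>x0 \<in> S\<close> by (simp add: K_def)
  then have "0 < T"
    unfolding T_def using m(1) \<zeta>(2) by (intro divide_pos_pos add_nonneg_pos divide_nonneg_pos) auto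
  have "m * T * (1 - \<zeta>) = f x0 - fmin + m"
    using m(1) \<zeta>(2) by (simp add: T_def field_simps)
  have "\<not> ereal T < b"
  proof
    assume "ereal T < b"
    then have "x t \<in> K" if "t \<in> {0..T}" for t
      using that in_K[of t] order.strict_trans1[OF _ \<open>ereal T < b\<close>, of "ereal t"] by auto
    then have "f (x T) \<le> f x0 - (1 - \<zeta>) * m * T"
      using \<open>0 < T\<close> \<open>ereal T < b\<close> m(2) \<zeta> by (intro sfield_sol_descent[OF f _ _ sol]) auto
    moreover have "fmin \<le> f (x T)"
      using fmin in_K \<open>0 < T\<close> \<open>ereal T < b\<close> by auto
    ultimately show False
      using \<open>m * T * (1 - \<zeta>) = f x0 - fmin + m\<close> m(1) by (simp add: algebra_simps)
  qed
  moreover have "0 < b"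
    using sol by (simp add: is_sol_def)
  ultimately obtain B where B: "b = ereal B" "B \<le> T"
    by (cases b) auto
  then have "\<forall>t\<in>{0..<B}. x t \<in> K"
    using in_K by auto
  moreover have "\<forall>z\<in>Eset f g. norm (sfield f g \<zeta> z) \<le> 1 + \<zeta>"
    using norm_sfield_le \<zeta>(1) by blast
  ultimately show False
    using is_max_sol_leaves_compact[OF max[unfolded B(1)] open_Eset[OF f g]
        sfield_locally_lipschitz[OF f g] _ K] by blast
qed

theorem lemma5p10:
  fixes f g :: "real ^ 'n \<Rightarrow> real" and x0 :: "real ^ 'n"
  defines "\<Omega> \<equiv> {x. g x \<le> 0}"
  assumes A1: "filterlim f at_top at_infinity"
    and A2: "\<forall>x\<in>\<Omega>. grad f x \<noteq> 0"
    and A3: "\<forall>x\<in>\<Omega>. grad g x \<noteq> 0"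
    and A4: "C2 f" "C2 g"
    and x0: "x0 \<in> \<Omega>"
  shows "\<exists>C::real. \<forall>\<zeta> a b x. 0 \<le> \<zeta> \<and> \<zeta> < 1 \<and>
           is_max_sol (sfield f g \<zeta>) (Eset f g) x0 a b x \<longrightarrow>
           (\<exists>\<tau>. 0 \<le> \<tau> \<and> ereal \<tau> < b \<and> x \<tau> \<in> frontier \<Omega> \<and> \<tau> \<le> C / (1 - \<zeta>))"
proof -
  define K where "K = \<Omega> \<inter> {y. f y \<le> f x0}"
  have "closed \<Omega>"
    unfolding \<Omega>_def by (intro closed_Collect_le C2_continuous_on[OF A4(2)] continuous_on_const)
  then have "compact K"
    unfolding K_def by (intro closed_Int_compact compact_sublevel_set C2_continuous_on A4(1) A1)
  moreover have "x0 \<in> K" "K \<subseteq> Eset f g"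
    using x0 A2 A3 by (auto simp: K_def Eset_def)
  ultimately obtain y_m y_f where "y_m \<in> K" "\<And>y. y \<in> K \<Longrightarrow> norm (grad f y_m) \<le> norm (grad f y)"
    and "\<And>y. y \<in> K \<Longrightarrow> f y_f \<le> f y"
    using continuous_attains_inf[of K "\<lambda>y. norm (grad f y)"] continuous_attains_inf[of K f]
    by (metis C2_continuous_on C2_continuous_on_grad A4(1) continuous_on_norm empty_iff)
  moreover have "0 < norm (grad f y_m)"
    using \<open>y_m \<in> K\<close> A2 by (simp add: K_def)
  ultimately show ?thesis
    using sfield_max_sol_reaches_frontier[OF A4 x0 \<open>compact K\<close>[unfolded K_def]
        \<open>K \<subseteq> Eset f g\<close>[unfolded K_def]] unfolding K_def by blast
qed

end
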